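(* Consider the classical secretary problem with $n$ candidates: $n$ candidates with distinct ranks arrive one at a time in uniformly random order (all $n!$ orders equally likely); after seeing the $k$-th candidate the decision maker knows only the relative ranks of the first $k$ candidates, must decide immediately and irrevocably whether to stop, and wins if the candidate at which he stops is the overall best. Let $V(n)$ be the maximal win probability over all (non-anticipating) stopping rules. For $k\in\{1,\dots,n\}$ let the threshold rule $\tau_k$ stop at the first candidate with index $j\ge k$ that is relatively best (better than all candidates $1,\dots,j-1$), and stop at candidate $n$ if there is none. Then: (i) $V(n)$ is strictly decreasing in $n$ for $n\ge 3$, i.e. $V(n+1)<V(n)$ for all $n\ge3$; (ii) for every $n\ge 3$ the optimal threshold is unique, i.e. there is exactly one $k\in\{1,\dots,n\}$ for which the win probability of $\tau_k$ is maximal among $\tau_1,\dots,\tau_n$.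
   Context: For $k\ge2$ the win probability of $\tau_k$ equals $\frac{k-1}{n}\sum_{j=k-1}^{n-1}\frac1j$, and that of $\tau_1$ is $1/n$; an optimal threshold rule achieves $V(n)$. *)

theory Defs
  imports "HOL-Combinatorics.Permutations" Complex_Main
begin

text \<open>Arrival orders: a bijection sigma on {..<n}; sigma i is the (absolute) rank of the
candidate arriving at (0-based) position i, larger rank = better, so the overall best
candidate has rank n - 1. All n! orders are equally likely.\<close>

definition orders :: "nat \<Rightarrow> (nat \<Rightarrow> nat) set" where
  "orders n = {\<sigma>. \<sigma> permutes {..<n}}"

definition info :: "(nat \<Rightarrow> nat) \<Rightarrow> nat \<Rightarrow> (nat \<Rightarrow> nat \<Rightarrow> bool)" where
  "info \<sigma> j = (\<lambda>a b. a \<le> j \<and> b \<le> j \<and> \<sigma> a < \<sigma> b)"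

text \<open>A (non-anticipating, deterministic) stopping rule decides at position j
using only the relative-order information up to j.\<close>

type_synonym rule = "nat \<Rightarrow> (nat \<Rightarrow> nat \<Rightarrow> bool) \<Rightarrow> bool"

text \<open>Stopping position (0-based); if the rule never says stop, the decision maker
stops at the last candidate (this convention does not affect the optimum).\<close>

definition stop_pos :: "nat \<Rightarrow> rule \<Rightarrow> (nat \<Rightarrow> nat) \<Rightarrow> nat" where
  "stop_pos n r \<sigma> =
     (if \<exists>j<n. r j (info \<sigma> j) then (LEAST j. j < n \<and> r j (info \<sigma> j)) else n - 1)"

definition win_prob :: "nat \<Rightarrow> rule \<Rightarrow> real" where
  "win_prob n r =
     real (card {\<sigma> \<in> orders n. \<sigma> (stop_pos n r \<sigma>) = n - 1}) / real (card (orders n))"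

definition V :: "nat \<Rightarrow> real" where
  "V n = (SUP r. win_prob n r)"

text \<open>Threshold rule tau_k (k 1-based): stop at the first candidate with (1-based)
index >= k that is relatively best.\<close>

definition thr :: "nat \<Rightarrow> rule" where
  "thr k = (\<lambda>j I. k \<le> Suc j \<and> (\<forall>i<j. I i j))"

end

theory Submission
  imports Defs "HOL-Computational_Algebra.Primes"
begin

(* Let A j count the arrival orders in which a rule is still running at position j, and C j those
   in which it stops at j on a relatively best candidate.  Being relatively best at j is
   independent of the relative order of the earlier arrivals, and a relatively best candidate at
   j is the overall best with probability (j+1)/n; hence n * n! times the win probability is
   sum_j (j+1) C j, subject to (j+1) C j <= A j and A (j+1) + C j <= A j.  The largest threshold
   value j' * sum_{i=j'}^{n-1} 1/i over j' >= j gives a dual solution of this linear program and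
   is attained by a threshold rule, so n V n is the largest threshold value.  Both claims then
   rest on the fact that sum_{i=a}^{n-1} 1/i is never 1 for 2 <= a < n, because exactly one
   denominator has maximal 2-adic valuation: this makes the threshold values strictly unimodal,
   and it rules out the only case in which the optimum for n+1 could equal a threshold value
   for n. *)

section \<open>Inserting the last arrival\<close>

lemma finite_orders: "finite (orders n)"
  unfolding orders_def by (rule finite_permutations) simp

lemma card_orders: "card (orders n) = fact n"
  unfolding orders_def by (rule card_permutations) simp_all

lemma orders_less: "\<sigma> \<in> orders n \<Longrightarrow> i < n \<Longrightarrow> \<sigma> i < n"
  unfolding orders_def using permutes_in_image by fastforce

definition shift_from :: "nat \<Rightarrow> nat \<Rightarrow> nat" where
  "shift_from v x = (if x < v then x else Suc x)"

(* The first m arrivals are in the relative order of \<rho>, the last one has rank v. *)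
definition insert_last :: "nat \<Rightarrow> nat \<Rightarrow> (nat \<Rightarrow> nat) \<Rightarrow> nat \<Rightarrow> nat" where
  "insert_last m v \<rho> = (\<lambda>i. if i < m then shift_from v (\<rho> i) else if i = m then v else i)"

lemma shift_from_less_iff [simp]: "shift_from v x < shift_from v y \<longleftrightarrow> x < y"
  by (simp add: shift_from_def)

lemma shift_from_eq_iff [simp]: "shift_from v x = shift_from v y \<longleftrightarrow> x = y"
  by (simp add: shift_from_def)

lemma shift_from_neq [simp]: "shift_from v x \<noteq> v" "v \<noteq> shift_from v x"
  by (auto simp: shift_from_def)

lemma insert_last_permutes:
  assumes "v \<le> m" and "\<rho> permutes {..<m}"
  shows "insert_last m v \<rho> permutes {..<Suc m}"
proof (rule bij_imp_permutes)
  have "inj_on (insert_last m v \<rho>) {..<Suc m}"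
  proof (rule inj_onI)
    fix x y assume "x \<in> {..<Suc m}" "y \<in> {..<Suc m}" "insert_last m v \<rho> x = insert_last m v \<rho> y"
    then show "x = y"
      using permutes_inj[OF assms(2)]
      by (cases "x < m"; cases "y < m") (auto simp: insert_last_def dest: injD)
  qed
  moreover have "insert_last m v \<rho> i < Suc m" if "i < Suc m" for i
  proof (cases "i < m")
    case True
    then have "\<rho> i < m" using permutes_in_image[OF assms(2)] by simp
    with True show ?thesis by (simp add: insert_last_def shift_from_def)
  qed (use that assms(1) in \<open>simp add: insert_last_def\<close>)
  ultimately show "bij_betw (insert_last m v \<rho>) {..<Suc m} {..<Suc m}"
    unfolding bij_betw_def by (intro conjI endo_inj_surj) auto
qed (simp add: insert_last_def)

lemma bij_betw_insert_last:
  "bij_betw (\<lambda>(v, \<rho>). insert_last m v \<rho>) ({..m} \<times> orders m) (orders (Suc m))"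
proof -
  let ?f = "\<lambda>(v, \<rho>). insert_last m v \<rho>"
  have inj: "inj_on ?f ({..m} \<times> orders m)"
  proof (rule inj_onI, clarify, intro conjI)
    fix v w \<rho> \<tau> assume "\<rho> \<in> orders m" "\<tau> \<in> orders m"
      and eq: "insert_last m v \<rho> = insert_last m w \<tau>"
    show v_w: "v = w" using fun_cong[OF eq, of m] by (simp add: insert_last_def)
    show "\<rho> = \<tau>"
    proof
      fix i show "\<rho> i = \<tau> i"
      proof (cases "i < m")
        case True
        then show ?thesis
          using fun_cong[OF eq, of i] v_w by (simp add: insert_last_def)
      next
        case False
        then show ?thesis
          using \<open>\<rho> \<in> orders m\<close> \<open>\<tau> \<in> orders m\<close> by (simp add: orders_def permutes_not_in)
      qed
    qed
  qed
  have "?f ` ({..m} \<times> orders m) = orders (Suc m)"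
  proof (rule card_subset_eq)
    show "?f ` ({..m} \<times> orders m) \<subseteq> orders (Suc m)"
      unfolding orders_def by (auto intro: insert_last_permutes)
    show "card (?f ` ({..m} \<times> orders m)) = card (orders (Suc m))"
      by (simp add: card_image[OF inj] card_cartesian_product card_orders)
  qed (rule finite_orders)
  with inj show ?thesis by (simp add: bij_betw_def)
qed

lemma card_orders_Suc_product:
  assumes "\<And>v \<rho>. v \<le> m \<Longrightarrow> \<rho> \<in> orders m \<Longrightarrow> P (insert_last m v \<rho>) \<longleftrightarrow> A v \<and> B \<rho>"
  shows "card {\<sigma> \<in> orders (Suc m). P \<sigma>} = card {v. v \<le> m \<and> A v} * card {\<rho> \<in> orders m. B \<rho>}"
proof -
  let ?f = "\<lambda>(v, \<rho>). insert_last m v \<rho>"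
  let ?X = "{v. v \<le> m \<and> A v} \<times> {\<rho> \<in> orders m. B \<rho>}"
  have "{\<sigma> \<in> orders (Suc m). P \<sigma>} = ?f ` {x \<in> {..m} \<times> orders m. P (?f x)}"
    unfolding bij_betw_imp_surj_on[OF bij_betw_insert_last, symmetric] by blast
  also have "{x \<in> {..m} \<times> orders m. P (?f x)} = ?X"
    using assms by auto
  finally have "{\<sigma> \<in> orders (Suc m). P \<sigma>} = ?f ` ?X" .
  moreover have "inj_on ?f ?X"
    by (rule inj_on_subset[OF bij_betw_imp_inj_on[OF bij_betw_insert_last]]) auto
  ultimately show ?thesis by (simp add: card_image card_cartesian_product)
qed

section \<open>Relatively best candidates\<close>

definition same_order_below :: "nat \<Rightarrow> (nat \<Rightarrow> nat) \<Rightarrow> (nat \<Rightarrow> nat) \<Rightarrow> bool" where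
  "same_order_below j \<sigma> \<tau> \<longleftrightarrow> (\<forall>a<j. \<forall>b<j. \<sigma> a < \<sigma> b \<longleftrightarrow> \<tau> a < \<tau> b)"

definition determined_before :: "nat \<Rightarrow> ((nat \<Rightarrow> nat) \<Rightarrow> bool) \<Rightarrow> bool" where
  "determined_before j Q \<longleftrightarrow> (\<forall>\<sigma> \<tau>. same_order_below j \<sigma> \<tau> \<longrightarrow> Q \<sigma> = Q \<tau>)"

lemma same_order_below_insert_last: "j \<le> m \<Longrightarrow> same_order_below j (insert_last m v \<rho>) \<rho>"
  by (auto simp: same_order_below_def insert_last_def)

lemma determined_before_mono: "i \<le> j \<Longrightarrow> determined_before i Q \<Longrightarrow> determined_before j Q"
  by (auto simp: determined_before_def same_order_below_def)

lemma determined_before_insert_last: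
  "determined_before j Q \<Longrightarrow> j \<le> m \<Longrightarrow> Q (insert_last m v \<rho>) = Q \<rho>"
  by (simp add: determined_before_def same_order_below_insert_last)

lemma info_eq_if_same_order_below: "same_order_below (Suc j) \<sigma> \<tau> \<Longrightarrow> info \<sigma> j = info \<tau> j"
  by (auto simp: same_order_below_def info_def fun_eq_iff)

definition is_record :: "nat \<Rightarrow> (nat \<Rightarrow> nat) \<Rightarrow> bool" where
  "is_record j \<sigma> \<longleftrightarrow> (\<forall>i<j. \<sigma> i < \<sigma> j)"

lemma determined_before_is_record: "determined_before (Suc j) (is_record j)"
  by (auto simp: determined_before_def same_order_below_def is_record_def)

lemma is_record_insert_last_self:
  assumes "v \<le> m" and "\<rho> \<in> orders m"
  shows "is_record m (insert_last m v \<rho>) \<longleftrightarrow> v = m"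
proof
  assume rec: "is_record m (insert_last m v \<rho>)"
  show "v = m"
  proof (rule ccontr)
    assume "v \<noteq> m"
    with assms have "v \<in> \<rho> ` {..<m}"
      using permutes_image[of \<rho> "{..<m}"] by (auto simp: orders_def)
    with rec show False by (auto simp: is_record_def insert_last_def shift_from_def)
  qed
next
  assume "v = m"
  then show "is_record m (insert_last m v \<rho>)"
    using orders_less[OF assms(2)] by (simp add: is_record_def insert_last_def shift_from_def)
qed

lemma best_at_last_iff_is_record:
  assumes "\<sigma> \<in> orders (Suc m)"
  shows "\<sigma> m = m \<longleftrightarrow> is_record m \<sigma>"
proof -
  obtain v \<rho> where "v \<le> m" "\<rho> \<in> orders m" "\<sigma> = insert_last m v \<rho>"
    using assms bij_betw_imp_surj_on[OF bij_betw_insert_last, of m] by force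
  then show ?thesis by (simp add: is_record_insert_last_self) (simp add: insert_last_def)
qed

lemma card_orders_is_record:
  assumes "j < n" and "determined_before j Q"
  shows "Suc j * card {\<sigma> \<in> orders n. Q \<sigma> \<and> is_record j \<sigma>} = card {\<sigma> \<in> orders n. Q \<sigma>}"
  using assms(1)
proof (induction n)
  case (Suc m)
  have Q: "Q (insert_last m v \<rho>) = Q \<rho>" for v \<rho>
    using determined_before_insert_last[OF assms(2)] Suc.prems by simp
  have atMost: "{v. v \<le> m \<and> True} = {..m}" by auto
  have "card {\<sigma> \<in> orders (Suc m). Q \<sigma>} = card {v. v \<le> m \<and> True} * card {\<rho> \<in> orders m. Q \<rho>}"
    by (rule card_orders_Suc_product) (simp add: Q)
  then have all: "card {\<sigma> \<in> orders (Suc m). Q \<sigma>} = Suc m * card {\<rho> \<in> orders m. Q \<rho>}"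
    by (simp only: atMost card_atMost)
  show ?case
  proof (cases "j = m")
    case True
    have "card {\<sigma> \<in> orders (Suc m). Q \<sigma> \<and> is_record j \<sigma>}
        = card {v. v \<le> m \<and> v = m} * card {\<rho> \<in> orders m. Q \<rho>}"
      by (rule card_orders_Suc_product) (auto simp: True Q is_record_insert_last_self)
    moreover have "{v. v \<le> m \<and> v = m} = {m}" by auto
    ultimately show ?thesis using all True by simp
  next
    case False
    with Suc.prems have "j < m" by simp
    then have "is_record j (insert_last m v \<rho>) = is_record j \<rho>" for v \<rho>
      by (simp add: determined_before_insert_last[OF determined_before_is_record])
    then have "card {\<sigma> \<in> orders (Suc m). Q \<sigma> \<and> is_record j \<sigma>}
        = card {v. v \<le> m \<and> True} * card {\<rho> \<in> orders m. Q \<rho> \<and> is_record j \<rho>}"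
      by (intro card_orders_Suc_product) (simp add: Q)
    then have "Suc j * card {\<sigma> \<in> orders (Suc m). Q \<sigma> \<and> is_record j \<sigma>}
        = Suc m * (Suc j * card {\<rho> \<in> orders m. Q \<rho> \<and> is_record j \<rho>})"
      by (simp only: atMost card_atMost mult.left_commute)
    then show ?thesis by (simp only: all Suc.IH[OF \<open>j < m\<close>])
  qed
qed simp

lemma card_orders_best_at:
  assumes "j < n" and "determined_before (Suc j) Q"
  shows "n * card {\<sigma> \<in> orders n. Q \<sigma> \<and> \<sigma> j = n - 1}
       = Suc j * card {\<sigma> \<in> orders n. Q \<sigma> \<and> is_record j \<sigma>}"
  using assms(1)
proof (induction n)
  case (Suc m)
  show ?case
  proof (cases "j = m")
    case True
    then have "{\<sigma> \<in> orders (Suc m). Q \<sigma> \<and> \<sigma> j = Suc m - 1}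
             = {\<sigma> \<in> orders (Suc m). Q \<sigma> \<and> is_record j \<sigma>}"
      using best_at_last_iff_is_record[of _ m] by auto
    then show ?thesis using True by simp
  next
    case False
    with Suc.prems have "j < m" by simp
    then have Q: "Q (insert_last m v \<rho>) = Q \<rho>"
      and rec: "is_record j (insert_last m v \<rho>) = is_record j \<rho>" for v \<rho>
      by (simp_all add: determined_before_insert_last[OF assms(2)]
          determined_before_insert_last[OF determined_before_is_record])
    have best: "insert_last m v \<rho> j = m \<longleftrightarrow> v < m \<and> \<rho> j = m - 1" if "\<rho> \<in> orders m" for v \<rho>
      using orders_less[OF that \<open>j < m\<close>] \<open>j < m\<close> by (auto simp: insert_last_def shift_from_def)
    have "card {\<sigma> \<in> orders (Suc m). Q \<sigma> \<and> \<sigma> j = m}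
        = card {v. v \<le> m \<and> v < m} * card {\<rho> \<in> orders m. Q \<rho> \<and> \<rho> j = m - 1}"
      by (intro card_orders_Suc_product) (auto simp: Q best)
    moreover have "card {\<sigma> \<in> orders (Suc m). Q \<sigma> \<and> is_record j \<sigma>}
        = card {v. v \<le> m \<and> True} * card {\<rho> \<in> orders m. Q \<rho> \<and> is_record j \<rho>}"
      by (intro card_orders_Suc_product) (simp add: Q rec)
    moreover have "{v. v \<le> m \<and> v < m} = {..<m}" "{v. v \<le> m \<and> True} = {..m}" by auto
    ultimately have "Suc m * card {\<sigma> \<in> orders (Suc m). Q \<sigma> \<and> \<sigma> j = m}
        = Suc m * (m * card {\<rho> \<in> orders m. Q \<rho> \<and> \<rho> j = m - 1})"
      and "Suc j * card {\<sigma> \<in> orders (Suc m). Q \<sigma> \<and> is_record j \<sigma>}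
        = Suc m * (Suc j * card {\<rho> \<in> orders m. Q \<rho> \<and> is_record j \<rho>})"
      by (simp_all only: card_lessThan card_atMost mult.left_commute)
    then show ?thesis by (simp only: Suc.IH[OF \<open>j < m\<close>] diff_Suc_1)
  qed
qed simp

section \<open>Stopping rules as a linear program\<close>

definition running :: "rule \<Rightarrow> nat \<Rightarrow> (nat \<Rightarrow> nat) \<Rightarrow> bool" where
  "running r j \<sigma> \<longleftrightarrow> (\<forall>i<j. \<not> r i (info \<sigma> i))"

definition stops_at :: "nat \<Rightarrow> rule \<Rightarrow> nat \<Rightarrow> (nat \<Rightarrow> nat) \<Rightarrow> bool" where
  "stops_at n r j \<sigma> \<longleftrightarrow> running r j \<sigma> \<and> (r j (info \<sigma> j) \<or> j = n - 1)"

lemma same_order_below_mono: "same_order_below j \<sigma> \<tau> \<Longrightarrow> i \<le> j \<Longrightarrow> same_order_below i \<sigma> \<tau>"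
  by (simp add: same_order_below_def)

lemma determined_before_running: "determined_before j (running r j)"
  unfolding determined_before_def running_def
  by (metis Suc_leI info_eq_if_same_order_below same_order_below_mono)

lemma determined_before_stops_at: "determined_before (Suc j) (stops_at n r j)"
proof (unfold determined_before_def, intro allI impI)
  fix \<sigma> \<tau> assume same: "same_order_below (Suc j) \<sigma> \<tau>"
  have "determined_before (Suc j) (running r j)"
    by (rule determined_before_mono[OF _ determined_before_running]) simp
  with same have "running r j \<sigma> = running r j \<tau>"
    unfolding determined_before_def by blast
  moreover have "info \<sigma> j = info \<tau> j"
    using same by (rule info_eq_if_same_order_below)
  ultimately show "stops_at n r j \<sigma> = stops_at n r j \<tau>"
    by (simp add: stops_at_def)
qed

lemma running_Suc: "running r (Suc j) \<sigma> \<longleftrightarrow> running r j \<sigma> \<and> \<not> r j (info \<sigma> j)"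
  by (auto simp: running_def less_Suc_eq)

lemma stop_pos_eq_iff:
  assumes "j < n"
  shows "stop_pos n r \<sigma> = j \<longleftrightarrow> stops_at n r j \<sigma>"
proof (cases "\<exists>i<n. r i (info \<sigma> i)")
  case True
  let ?P = "\<lambda>i. i < n \<and> r i (info \<sigma> i)"
  have pos: "stop_pos n r \<sigma> = (LEAST i. ?P i)"
    using True by (simp add: stop_pos_def)
  show ?thesis
  proof
    assume "stop_pos n r \<sigma> = j"
    then have least: "(LEAST i. ?P i) = j" using pos by simp
    have "?P (LEAST i. ?P i)" by (rule LeastI_ex[of ?P]) (use True in blast)
    moreover have "\<not> ?P i" if "i < (LEAST i. ?P i)" for i using that by (rule not_less_Least)
    ultimately show "stops_at n r j \<sigma>"
      unfolding least stops_at_def running_def using assms by auto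
  next
    assume stops: "stops_at n r j \<sigma>"
    then have before: "\<And>i. i < j \<Longrightarrow> \<not> ?P i"
      by (simp add: stops_at_def running_def)
    have "r j (info \<sigma> j)"
    proof (rule ccontr)
      assume "\<not> r j (info \<sigma> j)"
      with stops have "j = n - 1" by (simp add: stops_at_def)
      obtain i where "i < n" and i: "r i (info \<sigma> i)" using True by blast
      with before have "\<not> i < j" by blast
      with \<open>i < n\<close> \<open>j = n - 1\<close> have "i = j" by linarith
      with i \<open>\<not> r j (info \<sigma> j)\<close> show False by simp
    qed
    with assms before have "(LEAST i. ?P i) = j"
      by (intro Least_equality) (auto intro!: leI)
    with pos show "stop_pos n r \<sigma> = j" by simp
  qed
next
  case False
  then show ?thesis using assms by (auto simp: stop_pos_def stops_at_def running_def)
qed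

lemma stop_pos_less: "0 < n \<Longrightarrow> stop_pos n r \<sigma> < n"
  unfolding stop_pos_def by (auto intro: LeastI2_ex)

lemma card_win_eq_sum:
  assumes "0 < n"
  shows "card {\<sigma> \<in> orders n. \<sigma> (stop_pos n r \<sigma>) = n - 1}
       = (\<Sum>j<n. card {\<sigma> \<in> orders n. stops_at n r j \<sigma> \<and> \<sigma> j = n - 1})"
proof -
  let ?W = "{\<sigma> \<in> orders n. \<sigma> (stop_pos n r \<sigma>) = n - 1}"
  have "card ?W = (\<Sum>j<n. \<Sum>\<sigma> \<in> {\<sigma> \<in> ?W. stop_pos n r \<sigma> = j}. 1)"
    unfolding card_eq_sum
    by (rule sum.group[symmetric]) (use stop_pos_less[OF assms] finite_orders in auto)
  also have "\<dots> = (\<Sum>j<n. card {\<sigma> \<in> orders n. stops_at n r j \<sigma> \<and> \<sigma> j = n - 1})"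
  proof (rule sum.cong)
    fix j assume "j \<in> {..<n}"
    then have "{\<sigma> \<in> ?W. stop_pos n r \<sigma> = j} = {\<sigma> \<in> orders n. stops_at n r j \<sigma> \<and> \<sigma> j = n - 1}"
      by (auto simp: stop_pos_eq_iff[symmetric])
    then show "(\<Sum>\<sigma> \<in> {\<sigma> \<in> ?W. stop_pos n r \<sigma> = j}. 1) = card {\<sigma> \<in> orders n. stops_at n r j \<sigma> \<and> \<sigma> j = n - 1}"
      by simp
  qed simp
  finally show ?thesis .
qed

lemma win_prob_eq_sum:
  assumes "0 < n"
  shows "win_prob n r = (\<Sum>j<n. real (Suc j) * card {\<sigma> \<in> orders n. stops_at n r j \<sigma> \<and> is_record j \<sigma>})
                        / (real n * fact n)"
proof -
  have best: "real (card {\<sigma> \<in> orders n. stops_at n r j \<sigma> \<and> \<sigma> j = n - 1})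
      = real (Suc j) * card {\<sigma> \<in> orders n. stops_at n r j \<sigma> \<and> is_record j \<sigma>} / real n"
    if "j < n" for j
    using card_orders_best_at[OF that determined_before_stops_at, of n r] assms
    by (simp add: field_simps flip: of_nat_mult)
  have "real (card {\<sigma> \<in> orders n. \<sigma> (stop_pos n r \<sigma>) = n - 1})
      = (\<Sum>j<n. real (card {\<sigma> \<in> orders n. stops_at n r j \<sigma> \<and> \<sigma> j = n - 1}))"
    by (simp only: card_win_eq_sum[OF assms] of_nat_sum)
  also have "\<dots> = (\<Sum>j<n. real (Suc j) * card {\<sigma> \<in> orders n. stops_at n r j \<sigma> \<and> is_record j \<sigma>} / real n)"
    by (rule sum.cong[OF refl], rule best) simp
  finally have "real (card {\<sigma> \<in> orders n. \<sigma> (stop_pos n r \<sigma>) = n - 1})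
      = (\<Sum>j<n. real (Suc j) * card {\<sigma> \<in> orders n. stops_at n r j \<sigma> \<and> is_record j \<sigma>}) / real n"
    by (simp add: sum_divide_distrib)
  then show ?thesis
    by (simp add: win_prob_def card_orders divide_divide_eq_left mult.commute)
qed

lemma card_stops_at_record_le:
  assumes "j < n"
  shows "Suc j * card {\<sigma> \<in> orders n. stops_at n r j \<sigma> \<and> is_record j \<sigma>}
       \<le> card {\<sigma> \<in> orders n. running r j \<sigma>}"
proof -
  have "card {\<sigma> \<in> orders n. stops_at n r j \<sigma> \<and> is_record j \<sigma>}
     \<le> card {\<sigma> \<in> orders n. running r j \<sigma> \<and> is_record j \<sigma>}"
    by (rule card_mono) (auto simp: finite_orders stops_at_def)
  then have "Suc j * card {\<sigma> \<in> orders n. stops_at n r j \<sigma> \<and> is_record j \<sigma>}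
     \<le> Suc j * card {\<sigma> \<in> orders n. running r j \<sigma> \<and> is_record j \<sigma>}"
    by (rule mult_le_mono2)
  also have "\<dots> = card {\<sigma> \<in> orders n. running r j \<sigma>}"
    by (rule card_orders_is_record[OF assms determined_before_running])
  finally show ?thesis .
qed

lemma card_running_Suc_le:
  assumes "Suc j < n"
  shows "card {\<sigma> \<in> orders n. running r (Suc j) \<sigma>}
         + card {\<sigma> \<in> orders n. stops_at n r j \<sigma> \<and> is_record j \<sigma>}
       \<le> card {\<sigma> \<in> orders n. running r j \<sigma>}"
proof -
  have "card {\<sigma> \<in> orders n. running r (Suc j) \<sigma>}
        + card {\<sigma> \<in> orders n. stops_at n r j \<sigma> \<and> is_record j \<sigma>}
      = card ({\<sigma> \<in> orders n. running r (Suc j) \<sigma>}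
              \<union> {\<sigma> \<in> orders n. stops_at n r j \<sigma> \<and> is_record j \<sigma>})"
    using assms by (intro card_Un_disjoint[symmetric]) (auto simp: finite_orders running_Suc stops_at_def)
  also have "\<dots> \<le> card {\<sigma> \<in> orders n. running r j \<sigma>}"
    by (rule card_mono) (auto simp: finite_orders running_Suc stops_at_def)
  finally show ?thesis .
qed

(* The hypotheses on M say that M is a supersolution of the optimality
   equation (j+1) W j = max (j+1) (W (j+1)) + j W (j+1), W (n-1) = 1. *)

lemma weighted_stop_sum_le:
  fixes A C M :: "nat \<Rightarrow> real"
  assumes C_nonneg: "\<And>j. j < n \<Longrightarrow> 0 \<le> C j"
    and C_le: "\<And>j. j < n \<Longrightarrow> real (Suc j) * C j \<le> A j"
    and A_step: "\<And>j. Suc j < n \<Longrightarrow> A (Suc j) + C j \<le> A j"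
    and M_step: "\<And>j. Suc j < n \<Longrightarrow> M (Suc j) \<le> M j"
    and M_rec: "\<And>j. Suc j < n \<Longrightarrow> real (Suc j) + real j * M (Suc j) \<le> real (Suc j) * M j"
    and M_last: "1 \<le> M (n - 1)"
    and "j < n"
  shows "(\<Sum>i = j..<n. real (Suc i) * C i) \<le> A j * M j"
proof -
  have A_nonneg: "0 \<le> A j" if "j < n" for j
  proof -
    have "0 \<le> real (Suc j) * C j" using C_nonneg[OF that] by simp
    with C_le[OF that] show ?thesis by linarith
  qed
  have M_nonneg: "0 \<le> M j" if "j < n" for j
  proof -
    have "M (n - 1) \<le> M j"
      by (rule lift_Suc_antimono_le_ivl[where N = "{l. Suc l < n}"]) (use that M_step in auto)
    with M_last show ?thesis by simp
  qed
  from \<open>j < n\<close> have "j \<le> n - 1" by simp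
  then show ?thesis
  proof (induction j rule: inc_induct)
    case base
    have "{n - 1..<n} = {n - 1}" "Suc (n - 1) = n" using \<open>j < n\<close> by auto
    then have "(\<Sum>i = n - 1..<n. real (Suc i) * C i) = real n * C (n - 1)"
      by simp
    also have "\<dots> \<le> A (n - 1)"
      using C_le[of "n - 1"] \<open>j < n\<close> by simp
    also have "\<dots> \<le> A (n - 1) * M (n - 1)"
      using M_last A_nonneg[of "n - 1"] \<open>j < n\<close> by (simp add: mult_le_cancel_left1)
    finally show ?case .
  next
    case (step j)
    then have j: "Suc j < n" by simp
    let ?M = "M (Suc j)"
    have "(\<Sum>i = j..<n. real (Suc i) * C i) = real (Suc j) * C j + (\<Sum>i = Suc j..<n. real (Suc i) * C i)"
      using j by (simp add: sum.atLeast_Suc_lessThan)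
    also have "\<dots> \<le> real (Suc j) * C j + A (Suc j) * ?M"
      using step.IH by simp
    also have "\<dots> \<le> real (Suc j) * C j + (A j - C j) * ?M"
      using A_step[OF j] M_nonneg[OF j] by (intro add_left_mono mult_right_mono) auto
    also have "\<dots> \<le> A j * M j"
    proof (cases "?M \<le> real (Suc j)")
      case True
      \<comment> \<open>the worst case is \<open>C j\<close> maximal, i.e. \<open>(j + 1) C j = A j\<close>\<close>
      have "real (Suc j) * (C j * (real (Suc j) - ?M)) \<le> A j * (real (Suc j) - ?M)"
        using C_le[of j] j True by (simp add: mult.assoc[symmetric] mult_right_mono)
      then have "real (Suc j) * (real (Suc j) * C j + (A j - C j) * ?M)
          \<le> A j * (real (Suc j) + real j * ?M)"
        by (simp add: algebra_simps)
      also have "\<dots> \<le> A j * (real (Suc j) * M j)"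
        using M_rec[OF j] A_nonneg[of j] j by (intro mult_left_mono) auto
      finally have "real (Suc j) * (real (Suc j) * C j + (A j - C j) * ?M)
          \<le> real (Suc j) * (A j * M j)"
        by (simp add: ac_simps)
      then show ?thesis by (rule mult_left_le_imp_le) simp
    next
      case False
      then have "C j * (real (Suc j) - ?M) \<le> 0"
        using C_nonneg[of j] j by (simp add: mult_nonneg_nonpos)
      moreover have "A j * ?M \<le> A j * M j"
        using M_step[OF j] A_nonneg[of j] j by (intro mult_left_mono) auto
      ultimately show ?thesis by (simp add: algebra_simps)
    qed
    finally show ?case .
  qed
qed

lemma weighted_stop_sum_eq:
  fixes A C M :: "nat \<Rightarrow> real"
  assumes C_eq: "\<And>j. k \<le> j \<Longrightarrow> j < n \<Longrightarrow> real (Suc j) * C j = A j"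
    and A_step: "\<And>j. k \<le> j \<Longrightarrow> Suc j < n \<Longrightarrow> A (Suc j) + C j = A j"
    and M_rec: "\<And>j. k \<le> j \<Longrightarrow> Suc j < n \<Longrightarrow> real (Suc j) * M j = real (Suc j) + real j * M (Suc j)"
    and M_last: "M (n - 1) = 1"
    and "k \<le> j" and "j < n"
  shows "(\<Sum>i = j..<n. real (Suc i) * C i) = A j * M j"
proof -
  from \<open>j < n\<close> have "j \<le> n - 1" by simp
  then show ?thesis using \<open>k \<le> j\<close>
  proof (induction j rule: inc_induct)
    case base
    have "{n - 1..<n} = {n - 1}" "Suc (n - 1) = n" using \<open>j < n\<close> by auto
    then show ?case
      using C_eq[of "n - 1"] M_last base \<open>j < n\<close> by simp
  next
    case (step j)
    then have j: "Suc j < n" by simp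
    have C: "real (Suc j) * C j = A j" and A: "A (Suc j) = A j - C j"
      using C_eq[of j] A_step[of j] j step.prems by auto
    have "(\<Sum>i = j..<n. real (Suc i) * C i) = real (Suc j) * C j + A (Suc j) * M (Suc j)"
      using j step by (simp add: sum.atLeast_Suc_lessThan)
    also have "real (Suc j) * \<dots> = real (Suc j) * A j + real j * A j * M (Suc j)"
      unfolding A C[symmetric] by (simp add: algebra_simps)
    also have "\<dots> = real (Suc j) * (A j * M j)"
      using M_rec[of j] j step.prems by (simp add: algebra_simps)
    finally show ?case by simp
  qed
qed

section \<open>Harmonic tails and threshold values\<close>

lemma two_pow_dvd_between:
  fixes x y :: nat
  assumes "2 ^ e dvd x" and "2 ^ e dvd y" and "x < y"
  shows "\<exists>z. x \<le> z \<and> z \<le> y \<and> 2 ^ Suc e dvd z"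
proof -
  obtain a b where x: "x = 2 ^ e * a" and y: "y = 2 ^ e * b"
    using assms(1,2) by (auto elim!: dvdE)
  with assms(3) have "a < b" by simp
  show ?thesis
  proof (cases "even a")
    case True
    then show ?thesis using x assms(3) by (intro exI[of _ x]) auto
  next
    case False
    with \<open>a < b\<close> have "Suc a \<le> b" and "even (Suc a)" by auto
    then obtain c where c: "Suc a = 2 * c" by blast
    have "x \<le> 2 ^ e * Suc a" and "2 ^ e * Suc a \<le> y"
      using x y mult_le_mono2[OF \<open>Suc a \<le> b\<close>, of "2 ^ e"] by auto
    moreover have "2 ^ e * Suc a = 2 ^ Suc e * c"
      using c by simp
    ultimately show ?thesis by (metis dvd_triv_left)
  qed
qed

lemma interval_unique_max_multiplicity_two:
  fixes a b :: nat
  assumes "0 < a" and "Suc a < b"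
  obtains i0 :: nat where "i0 \<in> {a..<b}" and "0 < multiplicity 2 i0"
    and "\<And>i. i \<in> {a..<b} \<Longrightarrow> i \<noteq> i0 \<Longrightarrow> multiplicity 2 i < multiplicity 2 i0"
proof -
  let ?v = "multiplicity (2::nat)"
  obtain i0 where i0: "i0 \<in> {a..<b}" and max: "Max (?v ` {a..<b}) = ?v i0"
    using obtains_MAX[of "{a..<b}" ?v] assms by auto
  have le: "?v i \<le> ?v i0" if "i \<in> {a..<b}" for i
    using that max by (metis Max_ge finite_atLeastLessThan finite_imageI image_eqI)
  have "0 < ?v i0"
  proof -
    have "a \<in> {a..<b}" and "Suc a \<in> {a..<b}" and "even a \<or> even (Suc a)"
      using assms by auto
    then obtain i where "i \<in> {a..<b}" and "even i" by blast
    with assms have "0 < ?v i" by (subst multiplicity_gt_zero_iff) auto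
    with le[OF \<open>i \<in> {a..<b}\<close>] show ?thesis by simp
  qed
  moreover have "?v i < ?v i0" if i: "i \<in> {a..<b}" "i \<noteq> i0" for i
  proof (rule ccontr)
    assume "\<not> ?v i < ?v i0"
    with le[OF i(1)] have eq: "?v i = ?v i0" by simp
    have "2 ^ ?v i0 dvd i" and "2 ^ ?v i0 dvd i0"
      using multiplicity_dvd[of 2 i] multiplicity_dvd[of 2 i0] eq by auto
    then have "2 ^ ?v i0 dvd min i i0" and "2 ^ ?v i0 dvd max i i0"
      by (simp_all add: min_def max_def)
    moreover have "min i i0 < max i i0" using i(2) by auto
    ultimately obtain z where z: "min i i0 \<le> z" "z \<le> max i i0" "2 ^ Suc (?v i0) dvd z"
      using two_pow_dvd_between by blast
    then have "z \<in> {a..<b}" using i(1) i0 by auto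
    with assms have "Suc (?v i0) \<le> ?v z"
      using z(3) by (intro multiplicity_geI) auto
    with le[OF \<open>z \<in> {a..<b}\<close>] show False by simp
  qed
  ultimately show ?thesis using i0 that by blast
qed

lemma sum_inverse_not_int:
  fixes I :: "nat set"
  assumes "finite I" and "0 \<notin> I" and i0: "i0 \<in> I" and "0 < multiplicity 2 i0"
    and less: "\<And>i. i \<in> I \<Longrightarrow> i \<noteq> i0 \<Longrightarrow> multiplicity 2 i < multiplicity 2 i0"
  shows "(\<Sum>i\<in>I. 1 / real i) \<notin> \<int>"
proof
  \<comment> \<open>after multiplication by \<open>L\<close> every term but the one for \<open>i0\<close> is an integer, and that one is
    half an odd number\<close>
  let ?v = "multiplicity (2::nat)"
  define q where "q i = i div 2 ^ ?v i" for i
  define d where "d = (\<Prod>i\<in>I - {i0}. q i)"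
  define L where "L = 2 ^ (?v i0 - 1) * (\<Prod>i\<in>I. q i)"
  have decomp: "i = 2 ^ ?v i * q i" for i
    by (simp add: q_def multiplicity_dvd)
  have "odd (q i)" if "i \<in> I" for i
    using multiplicity_decompose[of i 2] that assms(2) by (cases "i = 0") (auto simp: q_def)
  then have "odd d"
    using assms(1) by (simp add: d_def even_prod_iff)
  have "2 * L = 2 ^ ?v i0 * (q i0 * d)"
    using assms(1,4) i0 by (simp add: L_def d_def prod.remove power_eq_if)
  then have L_i0: "2 * L = i0 * d"
    by (metis decomp mult.assoc)
  have dvd_L: "i dvd L" if "i \<in> I" "i \<noteq> i0" for i
  proof -
    have "2 ^ ?v i dvd (2::nat) ^ (?v i0 - 1)"
      using less[OF that] by (intro le_imp_power_dvd) simp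
    moreover have "q i dvd (\<Prod>i\<in>I. q i)"
      using assms(1) that(1) by (rule dvd_prodI)
    ultimately show ?thesis
      unfolding L_def by (subst decomp) (rule mult_dvd_mono)
  qed
  assume "(\<Sum>i\<in>I. 1 / real i) \<in> \<int>"
  then obtain z where z: "(\<Sum>i\<in>I. 1 / real i) = of_int z"
    by (elim Ints_cases)
  let ?S = "\<Sum>i\<in>I - {i0}. L div i"
  have "real L * of_int z = (\<Sum>i\<in>I. real L / real i)"
    by (simp add: z[symmetric] sum_distrib_left)
  also have "\<dots> = real L / real i0 + (\<Sum>i\<in>I - {i0}. real L / real i)"
    using assms(1) i0 by (simp add: sum.remove)
  also have "(\<Sum>i\<in>I - {i0}. real L / real i) = real ?S"
    using dvd_L by (simp add: real_of_nat_div)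
  also have "real L / real i0 = real d / 2"
  proof -
    have "real L * 2 = real d * real i0"
      using arg_cong[OF L_i0, of real] by (simp add: mult.commute)
    moreover have "real i0 \<noteq> 0" using i0 assms(2) by (metis of_nat_eq_0_iff)
    ultimately show ?thesis by (simp add: field_simps)
  qed
  finally have "real_of_int (int d) = real_of_int (2 * (int L * z - int ?S))"
    by simp
  then have "even (int d)"
    by (simp only: of_int_eq_iff) simp
  with \<open>odd d\<close> show False by simp
qed

definition harm_tail :: "nat \<Rightarrow> nat \<Rightarrow> real" where
  "harm_tail n j = (\<Sum>i = j..<n. 1 / real i)"

lemma harm_tail_nonneg: "0 \<le> harm_tail n j"
  unfolding harm_tail_def by (intro sum_nonneg) simp

lemma harm_tail_antimono: "j \<le> j' \<Longrightarrow> harm_tail n j' \<le> harm_tail n j"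
  unfolding harm_tail_def by (intro sum_mono2) auto

lemma harm_tail_Suc_left: "j < n \<Longrightarrow> harm_tail n j = 1 / real j + harm_tail n (Suc j)"
  unfolding harm_tail_def by (simp add: sum.atLeast_Suc_lessThan)

lemma harm_tail_Suc_right: "j \<le> n \<Longrightarrow> harm_tail (Suc n) j = harm_tail n j + 1 / real n"
  unfolding harm_tail_def by (simp add: sum.atLeastLessThan_Suc)

lemma harm_tail_1_ge: "3 \<le> n \<Longrightarrow> 3 / 2 \<le> harm_tail n 1"
  using harm_tail_Suc_left[of 1 n] harm_tail_Suc_left[of 2 n] harm_tail_nonneg[of n 3]
  by (simp add: numeral_2_eq_2 numeral_3_eq_3)

lemma harm_tail_not_int:
  assumes "0 < a" and "Suc a < n"
  shows "harm_tail n a \<notin> \<int>"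
proof -
  obtain i0 where "i0 \<in> {a..<n}" and "0 < multiplicity 2 i0"
    and "\<And>i. i \<in> {a..<n} \<Longrightarrow> i \<noteq> i0 \<Longrightarrow> multiplicity 2 i < multiplicity 2 i0"
    using interval_unique_max_multiplicity_two[OF assms] by blast
  then show ?thesis
    unfolding harm_tail_def using assms(1) by (intro sum_inverse_not_int) auto
qed

lemma harm_tail_neq_1:
  assumes "2 \<le> a" and "a < n"
  shows "harm_tail n a \<noteq> 1"
proof (cases "n = Suc a")
  case True
  then show ?thesis using assms(1) by (simp add: harm_tail_def)
next
  case False
  with assms have "harm_tail n a \<notin> \<int>" by (intro harm_tail_not_int) auto
  then show ?thesis by auto
qed

definition thr_value :: "nat \<Rightarrow> nat \<Rightarrow> real" where
  "thr_value n j = (if j = 0 then 1 else real j * harm_tail n j)"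

lemma thr_value_last:
  assumes "0 < n"
  shows "thr_value n (n - 1) = 1"
proof (cases "n = 1")
  case False
  with assms have "harm_tail n (n - 1) = 1 / real (n - 1)"
    using harm_tail_Suc_left[of "n - 1" n] by (simp add: harm_tail_def)
  with False show ?thesis by (simp add: thr_value_def)
qed (simp add: thr_value_def)

lemma thr_value_rec:
  assumes "Suc j < n"
  shows "real (Suc j) * thr_value n j = real (Suc j) + real j * thr_value n (Suc j)"
proof (cases "j = 0")
  case False
  have "harm_tail n j = 1 / real j + harm_tail n (Suc j)"
    using assms by (intro harm_tail_Suc_left) simp
  with False show ?thesis by (simp add: thr_value_def field_simps)
qed (simp add: thr_value_def)

lemma thr_value_Suc_diff:
  assumes "Suc j < n"
  shows "thr_value n (Suc j) - thr_value n j = harm_tail n (Suc j) - 1"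
proof (cases "j = 0")
  case False
  have "harm_tail n j = 1 / real j + harm_tail n (Suc j)"
    using assms by (intro harm_tail_Suc_left) simp
  with False show ?thesis by (simp add: thr_value_def field_simps)
qed (simp add: thr_value_def)

lemma thr_value_antimono:
  assumes "harm_tail n (Suc j) \<le> 1" and "j \<le> i" and "i \<le> i'" and "i' < n"
  shows "thr_value n i' \<le> thr_value n i"
proof (rule lift_Suc_antimono_le_ivl[where N = "{l. j \<le> l \<and> Suc l < n}"])
  fix l assume "l \<in> {l. j \<le> l \<and> Suc l < n}"
  then have "thr_value n (Suc l) - thr_value n l = harm_tail n (Suc l) - 1"
    and "harm_tail n (Suc l) \<le> harm_tail n (Suc j)"
    by (auto intro: thr_value_Suc_diff harm_tail_antimono)
  with assms(1) show "thr_value n (Suc l) \<le> thr_value n l" by simp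
qed (use assms in auto)

lemma thr_value_strict_antimono:
  assumes "harm_tail n (Suc j) < 1" and "j < i" and "i < n"
  shows "thr_value n i < thr_value n j"
proof -
  have "thr_value n (Suc j) - thr_value n j = harm_tail n (Suc j) - 1"
    using assms by (intro thr_value_Suc_diff) auto
  moreover have "thr_value n i \<le> thr_value n (Suc j)"
    using assms by (intro thr_value_antimono[of n j]) auto
  ultimately show ?thesis using assms(1) by simp
qed

definition max_thr_value :: "nat \<Rightarrow> nat \<Rightarrow> real" where
  "max_thr_value n j = Max (thr_value n ` {j..<n})"

lemma max_thr_value_ge: "j \<le> i \<Longrightarrow> i < n \<Longrightarrow> thr_value n i \<le> max_thr_value n j"
  unfolding max_thr_value_def by (intro Max_ge) auto

lemma max_thr_value_attained:
  assumes "j < n"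
  obtains i where "j \<le> i" and "i < n" and "max_thr_value n j = thr_value n i"
  using obtains_MAX[of "{j..<n}" "thr_value n"] assms unfolding max_thr_value_def by auto

lemma max_thr_value_Suc_le: "Suc j < n \<Longrightarrow> max_thr_value n (Suc j) \<le> max_thr_value n j"
  by (metis Suc_leD max_thr_value_attained max_thr_value_ge)

lemma max_thr_value_rec:
  assumes "Suc j < n"
  shows "real (Suc j) + real j * max_thr_value n (Suc j) \<le> real (Suc j) * max_thr_value n j"
proof (cases "real (Suc j) \<le> max_thr_value n (Suc j)")
  case True
  then have "real (Suc j) + real j * max_thr_value n (Suc j) \<le> real (Suc j) * max_thr_value n (Suc j)"
    by (simp add: algebra_simps)
  also have "\<dots> \<le> real (Suc j) * max_thr_value n j"
    using max_thr_value_Suc_le[OF assms] by (intro mult_left_mono) auto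
  finally show ?thesis .
next
  case False
  have "thr_value n (Suc j) < real (Suc j)"
    using False max_thr_value_ge[of "Suc j" "Suc j" n] assms by simp
  then have "harm_tail n (Suc j) \<le> 1"
    by (simp add: thr_value_def)
  obtain i where "Suc j \<le> i" "i < n" and i: "max_thr_value n (Suc j) = thr_value n i"
    using max_thr_value_attained[of "Suc j" n] assms by auto
  with \<open>harm_tail n (Suc j) \<le> 1\<close> have "max_thr_value n (Suc j) \<le> thr_value n (Suc j)"
    using thr_value_antimono[of n j "Suc j" i] by simp
  then have "real (Suc j) + real j * max_thr_value n (Suc j) \<le> real (Suc j) + real j * thr_value n (Suc j)"
    by (intro add_left_mono mult_left_mono) auto
  also have "\<dots> = real (Suc j) * thr_value n j"
    using thr_value_rec[OF assms] by simp
  also have "\<dots> \<le> real (Suc j) * max_thr_value n j"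
    using assms by (intro mult_left_mono max_thr_value_ge) auto
  finally show ?thesis .
qed

section \<open>The optimal win probability\<close>

lemma win_prob_le_max_thr_value:
  assumes "0 < n"
  shows "win_prob n r \<le> max_thr_value n 0 / real n"
proof -
  define A where "A j = real (card {\<sigma> \<in> orders n. running r j \<sigma>})" for j
  define C where "C j = real (card {\<sigma> \<in> orders n. stops_at n r j \<sigma> \<and> is_record j \<sigma>})" for j
  have "(\<Sum>i = 0..<n. real (Suc i) * C i) \<le> A 0 * max_thr_value n 0"
  proof (rule weighted_stop_sum_le)
    show "real (Suc j) * C j \<le> A j" if "j < n" for j
      unfolding A_def C_def of_nat_mult[symmetric] of_nat_le_iff
      using that by (rule card_stops_at_record_le)
    show "A (Suc j) + C j \<le> A j" if "Suc j < n" for j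
      unfolding A_def C_def of_nat_add[symmetric] of_nat_le_iff
      using that by (rule card_running_Suc_le)
    show "1 \<le> max_thr_value n (n - 1)"
      using max_thr_value_ge[of "n - 1" "n - 1" n] thr_value_last[OF assms] assms by simp
    show "max_thr_value n (Suc j) \<le> max_thr_value n j" if "Suc j < n" for j
      using that by (rule max_thr_value_Suc_le)
    show "real (Suc j) + real j * max_thr_value n (Suc j) \<le> real (Suc j) * max_thr_value n j"
      if "Suc j < n" for j
      using that by (rule max_thr_value_rec)
  qed (use assms in \<open>simp_all add: C_def\<close>)
  moreover have "A 0 = fact n"
    by (simp add: A_def running_def card_orders)
  ultimately show ?thesis
    using assms by (simp add: win_prob_eq_sum C_def atLeast0LessThan field_simps)
qed

lemma thr_info_iff: "thr k j (info \<sigma> j) \<longleftrightarrow> k \<le> Suc j \<and> is_record j \<sigma>"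
  by (auto simp: thr_def info_def is_record_def)

lemma win_prob_thr:
  assumes "1 \<le> k" and "k \<le> n"
  shows "win_prob n (thr k) = thr_value n (k - 1) / real n"
proof -
  define A where "A j = real (card {\<sigma> \<in> orders n. running (thr k) j \<sigma>})" for j
  define C where "C j = real (card {\<sigma> \<in> orders n. stops_at n (thr k) j \<sigma> \<and> is_record j \<sigma>})" for j
  have "(\<Sum>i = k - 1..<n. real (Suc i) * C i) = A (k - 1) * thr_value n (k - 1)"
  proof (rule weighted_stop_sum_eq)
    show "real (Suc j) * C j = A j" if "k - 1 \<le> j" "j < n" for j
    proof -
      have "k \<le> Suc j" using that by linarith
      then have "{\<sigma> \<in> orders n. stops_at n (thr k) j \<sigma> \<and> is_record j \<sigma>}
          = {\<sigma> \<in> orders n. running (thr k) j \<sigma> \<and> is_record j \<sigma>}"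
        by (auto simp: stops_at_def thr_info_iff)
      then show ?thesis
        unfolding A_def C_def of_nat_mult[symmetric]
        using card_orders_is_record[OF \<open>j < n\<close> determined_before_running, of "thr k"] by simp
    qed
    show "A (Suc j) + C j = A j" if "k - 1 \<le> j" "Suc j < n" for j
    proof -
      have "k \<le> Suc j" and "j \<noteq> n - 1" using that by linarith+
      then have "card {\<sigma> \<in> orders n. running (thr k) (Suc j) \<sigma>}
            + card {\<sigma> \<in> orders n. stops_at n (thr k) j \<sigma> \<and> is_record j \<sigma>}
          = card ({\<sigma> \<in> orders n. running (thr k) (Suc j) \<sigma>}
                  \<union> {\<sigma> \<in> orders n. stops_at n (thr k) j \<sigma> \<and> is_record j \<sigma>})"
        by (intro card_Un_disjoint[symmetric]) (auto simp: finite_orders running_Suc stops_at_def thr_info_iff)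
      also have "\<dots> = card {\<sigma> \<in> orders n. running (thr k) j \<sigma>}"
        using \<open>k \<le> Suc j\<close> \<open>j \<noteq> n - 1\<close>
        by (intro arg_cong[where f = card]) (auto simp: running_Suc stops_at_def thr_info_iff)
      finally show ?thesis
        unfolding A_def C_def of_nat_add[symmetric] by simp
    qed
    show "real (Suc j) * thr_value n j = real (Suc j) + real j * thr_value n (Suc j)"
      if "Suc j < n" for j
      using that by (rule thr_value_rec)
    show "thr_value n (n - 1) = 1"
      using assms by (intro thr_value_last) simp
  qed (use assms in simp_all)
  moreover have "A (k - 1) = fact n"
  proof -
    have "{\<sigma> \<in> orders n. running (thr k) (k - 1) \<sigma>} = orders n"
      by (auto simp: running_def thr_info_iff)
    then show ?thesis by (simp add: A_def card_orders)
  qed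
  moreover have "(\<Sum>i<n. real (Suc i) * C i) = (\<Sum>i = k - 1..<n. real (Suc i) * C i)"
  proof -
    have "C i = 0" if "i < k - 1" for i
    proof -
      have "\<not> k \<le> Suc i" and "i \<noteq> n - 1" using that assms by linarith+
      then have none: "{\<sigma> \<in> orders n. stops_at n (thr k) i \<sigma> \<and> is_record i \<sigma>} = {}"
        by (auto simp: stops_at_def thr_info_iff)
      show ?thesis unfolding C_def none by simp
    qed
    then show ?thesis by (intro sum.mono_neutral_right) auto
  qed
  ultimately show ?thesis
    using assms by (simp add: win_prob_eq_sum C_def field_simps)
qed

lemma V_eq_max_thr_value:
  assumes "0 < n"
  shows "V n = max_thr_value n 0 / real n"
proof (rule antisym)
  show "V n \<le> max_thr_value n 0 / real n"
    unfolding V_def by (rule cSUP_least) (use win_prob_le_max_thr_value[OF assms] in auto)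
  obtain i where "i < n" and i: "max_thr_value n 0 = thr_value n i"
    using max_thr_value_attained[OF assms] by auto
  have "bdd_above (range (win_prob n))"
    using win_prob_le_max_thr_value[OF assms] by (intro bdd_aboveI) auto
  then have "win_prob n (thr (Suc i)) \<le> V n"
    unfolding V_def by (rule cSUP_upper[OF UNIV_I])
  then show "max_thr_value n 0 / real n \<le> V n"
    using win_prob_thr[of "Suc i" n] \<open>i < n\<close> i by simp
qed

lemma thr_value_Suc_less:
  assumes "3 \<le> n" and "m \<le> n"
  obtains i where "i < n" and "thr_value (Suc n) m / real (Suc n) < thr_value n i / real n"
proof (cases "m = 0")
  case True
  then have "thr_value (Suc n) m / real (Suc n) < thr_value n 0 / real n"
    using assms(1) by (simp add: thr_value_def frac_less2)
  with assms(1) show ?thesis using that[of 0] by simp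
next
  case False
  define T where "T = harm_tail n m"
  have n: "0 < real n" using assms(1) by simp
  then have nz: "real n \<noteq> 0" "real n + 1 \<noteq> 0" by simp_all
  have lhs: "thr_value (Suc n) m = real m * (T + 1 / real n)"
    using False assms(2) by (simp add: thr_value_def T_def harm_tail_Suc_right)
  have "m < n" if "T \<noteq> 0"
    using that assms(2) by (cases "m = n") (auto simp: T_def harm_tail_def)
  have "2 \<le> m" if "T < 3 / 2"
    using that False harm_tail_1_ge[OF assms(1)] by (cases "m = 1") (auto simp: T_def)
  consider "1 < T" | "T < 1" | "T = 1" by linarith
  then show ?thesis
  proof cases
    case 1
    \<comment> \<open>the threshold \<open>m\<close> itself does better for \<open>n\<close>\<close>
    have "M * (T + 1 / N) / (N + 1) < M * T / N" if "0 < M" "0 < N" for M N :: real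
      using that 1 by (simp add: field_simps add_pos_pos)
    from this[of "real m" "real n"]
    have "thr_value (Suc n) m / real (Suc n) < thr_value n m / real n"
      using False n lhs by (simp add: thr_value_def T_def add.commute)
    with \<open>T \<noteq> 0 \<Longrightarrow> m < n\<close> 1 show ?thesis by (intro that[of m]) auto
  next
    case 2
    \<comment> \<open>the threshold \<open>m - 1\<close> does better for \<open>n\<close>\<close>
    have "2 \<le> m" using \<open>T < 3 / 2 \<Longrightarrow> 2 \<le> m\<close> 2 by simp
    have "thr_value n (m - 1) = real (m - 1) * (1 / real (m - 1) + T)"
      using \<open>2 \<le> m\<close> assms(2) harm_tail_Suc_left[of "m - 1" n] by (simp add: thr_value_def T_def)
    also have "\<dots> = 1 + (real m - 1) * T"
      using \<open>2 \<le> m\<close> by (simp add: field_simps of_nat_diff)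
    finally have rhs: "thr_value n (m - 1) = 1 + (real m - 1) * T" .
    have "M * (T + 1 / N) / (N + 1) < (1 + (M - 1) * T) / N" if "M \<le> N" "0 < N" for M N :: real
    proof -
      have "0 < (N + 1 - M) * (1 - T)"
        using that 2 by (intro mult_pos_pos) auto
      then have "0 < N + 1 - M - N * T - T + M * T"
        by (simp add: algebra_simps)
      with that show ?thesis
        by (simp add: divide_simps) (simp add: algebra_simps)
    qed
    from this[of "real m" "real n"]
    have "thr_value (Suc n) m / real (Suc n) < thr_value n (m - 1) / real n"
      using assms(2) n lhs rhs by (simp add: add.commute)
    with \<open>2 \<le> m\<close> assms(2) show ?thesis by (intro that[of "m - 1"]) auto
  next
    case 3
    with \<open>T < 3 / 2 \<Longrightarrow> 2 \<le> m\<close> \<open>T \<noteq> 0 \<Longrightarrow> m < n\<close> have "T \<noteq> 1"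
      unfolding T_def by (intro harm_tail_neq_1) auto
    with 3 show ?thesis by simp
  qed
qed

lemma V_Suc_less:
  assumes "3 \<le> n"
  shows "V (Suc n) < V n"
proof -
  obtain m where "m < Suc n" and m: "max_thr_value (Suc n) 0 = thr_value (Suc n) m"
    using max_thr_value_attained[of 0 "Suc n"] by auto
  then obtain i where "i < n" and i: "thr_value (Suc n) m / real (Suc n) < thr_value n i / real n"
    using thr_value_Suc_less[OF assms, of m] by auto
  have "V (Suc n) = thr_value (Suc n) m / real (Suc n)"
    using V_eq_max_thr_value[of "Suc n"] m by simp
  also have "\<dots> < thr_value n i / real n" by (rule i)
  also have "\<dots> \<le> max_thr_value n 0 / real n"
    using \<open>i < n\<close> by (intro divide_right_mono max_thr_value_ge) auto
  also have "\<dots> = V n"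
    using V_eq_max_thr_value[of n] assms by simp
  finally show ?thesis .
qed

lemma thr_value_strict_after_peak:
  assumes "3 \<le> n" and "i < i'" and "i' < n" and peak: "thr_value n (Suc i) \<le> thr_value n i"
  shows "thr_value n i' < thr_value n i"
proof -
  have "harm_tail n (Suc i) \<le> 1"
    using peak thr_value_Suc_diff[of i n] assms(2,3) by simp
  moreover have "i \<noteq> 0"
  proof
    assume "i = 0"
    with calculation harm_tail_1_ge[OF assms(1)] show False by simp
  qed
  then have "harm_tail n (Suc i) \<noteq> 1"
    using assms(2,3) by (intro harm_tail_neq_1) auto
  ultimately have "harm_tail n (Suc i) < 1" by simp
  then show ?thesis
    using assms(2,3) by (rule thr_value_strict_antimono)
qed

lemma thr_value_argmax_unique:
  assumes "3 \<le> n" and "i < n" and "i' < n"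
    and max: "\<forall>j<n. thr_value n j \<le> thr_value n i" and max': "\<forall>j<n. thr_value n j \<le> thr_value n i'"
  shows "i = i'"
proof (rule ccontr)
  assume "i \<noteq> i'"
  then consider "i < i'" | "i' < i" by linarith
  then show False
  proof cases
    case 1
    then have "thr_value n i' < thr_value n i"
      using assms(3) max by (intro thr_value_strict_after_peak[OF assms(1)]) auto
    with max' \<open>i < n\<close> show False by (auto simp: not_less[symmetric])
  next
    case 2
    then have "thr_value n i < thr_value n i'"
      using assms(2) max' by (intro thr_value_strict_after_peak[OF assms(1)]) auto
    with max \<open>i' < n\<close> show False by (auto simp: not_less[symmetric])
  qed
qed

lemma optimal_threshold_unique:
  assumes "3 \<le> n"
  shows "\<exists>!k. k \<in> {1..n} \<and> (\<forall>k'\<in>{1..n}. win_prob n (thr k') \<le> win_prob n (thr k))"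
proof -
  have optimal_iff: "(\<forall>k'\<in>{1..n}. win_prob n (thr k') \<le> win_prob n (thr k))
      \<longleftrightarrow> (\<forall>j<n. thr_value n j \<le> thr_value n (k - 1))" if "k \<in> {1..n}" for k
  proof -
    have "win_prob n (thr (Suc j)) \<le> win_prob n (thr k) \<longleftrightarrow> thr_value n j \<le> thr_value n (k - 1)"
      if "j < n" for j
      using that \<open>k \<in> {1..n}\<close> by (simp add: win_prob_thr divide_le_cancel)
    then show ?thesis
      unfolding image_Suc_lessThan[symmetric] by auto
  qed
  obtain i where "i < n" and "max_thr_value n 0 = thr_value n i"
    using max_thr_value_attained[of 0 n] assms by auto
  then have max: "\<forall>j<n. thr_value n j \<le> thr_value n i"
    using max_thr_value_ge[of 0 _ n] by simp
  show ?thesis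
  proof (rule ex1I[of _ "Suc i"])
    show "Suc i \<in> {1..n} \<and> (\<forall>k'\<in>{1..n}. win_prob n (thr k') \<le> win_prob n (thr (Suc i)))"
      using optimal_iff[of "Suc i"] \<open>i < n\<close> max by simp
  next
    fix k assume "k \<in> {1..n} \<and> (\<forall>k'\<in>{1..n}. win_prob n (thr k') \<le> win_prob n (thr k))"
    then have "k \<in> {1..n}" and "\<forall>j<n. thr_value n j \<le> thr_value n (k - 1)"
      using optimal_iff by auto
    then have "k - 1 = i"
      using thr_value_argmax_unique[OF assms _ \<open>i < n\<close> _ max] by auto
    with \<open>k \<in> {1..n}\<close> show "k = Suc i" by auto
  qed
qed

theorem theorem5p1:
  shows "(\<forall>n\<ge>3. V (Suc n) < V n) \<and>
         (\<forall>n\<ge>3. \<exists>!k. k \<in> {1..n} \<and> (\<forall>k'\<in>{1..n}. win_prob n (thr k') \<le> win_prob n (thr k)))"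
  using V_Suc_less optimal_threshold_unique by blast

end
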